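(* Let $\mathcal{X}_{\mathrm{sep}}$ denote the set of separable two-qubit $X$-states. Then $\max_{\rho\in\mathcal{X}_{\mathrm{sep}}} \mathcal{D}(\rho)=\tfrac14$, and every $\rho\in\mathcal{X}_{\mathrm{sep}}$ with $\mathcal{D}(\rho)=\tfrac14$ has rank $2$.
   Context: A two-qubit state is a density matrix $\rho$ (positive semidefinite, trace one) on $\mathbb{C}^2\otimes\mathbb{C}^2$; it is separable if it is a convex combination of product states $\rho_A\otimes\rho_B$. A two-qubit $X$-state is a state whose matrix in the computational basis $\{|00\rangle,|01\rangle,|10\rangle,|11\rangle\}$ has nonzero entries only on the main diagonal and the anti-diagonal, i.e. it has the form $\begin{pmatrix} a&0&0&p\\0&b&q&0\\0&\bar q&c&0\\ \bar p&0&0&d\end{pmatrix}$ with $a,b,c,d\ge0$ and $p,q\in\mathbb{C}$. The set $\Omega_0$ of classical-quantum (zero-discord) states consists of all states of the form $\sum_k p_k|\psi_k\rangle\langle\psi_k|\otimes\rho_k^B$, where $\{|\psi_k\rangle\}$ is an orthonormal basis of the first qubit, $p_k\ge0$ sum to one, and $\rho_k^B$ are states of the second qubit. The (normalized) geometric discord of a two-qubit state is $\mathcal{D}(\rho)=2\min_{\chi\in\Omega_0}\|\rho-\chi\|^2$, where $\|X\|^2=\operatorname{Tr}(X^\dagger X)$ is the squared Hilbert–Schmidt norm. Equivalently, writing $\rho=\frac14\big[I\otimes I+\sum_i x_i\sigma_i\otimes I+\sum_j y_j I\otimes\sigma_j+\sum_{i,j}T_{ij}\sigma_i\otimes\sigma_j\big]$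 with Pauli matrices $\sigma_1,\sigma_2,\sigma_3$, one has $\mathcal{D}(\rho)=\frac12\big[\|\mathbf{x}\|^2+\|T\|^2-\lambda_{\max}(\mathbf{x}\mathbf{x}^t+TT^t)\big]$. *)

theory Defs
  imports "HOL-Analysis.Analysis"
begin

text \<open>Qubit operators are complex 2x2 matrices indexed by the type 2 (elements 0, 1).
Two-qubit operators are indexed by pairs (i,j) :: 2 \<times> 2, i.e. the computational
basis vector |ij>.\<close>

type_synonym qmat = "complex^2^2"
type_synonym qqmat = "complex^(2\<times>2)^(2\<times>2)"

definition psd :: "complex^'n^'n \<Rightarrow> bool" where
  "psd M \<longleftrightarrow> (\<forall>v :: complex^'n.
     let q = (\<Sum>i\<in>UNIV. \<Sum>j\<in>UNIV. cnj (v$i) * M$i$j * v$j) in Im q = 0 \<and> Re q \<ge> 0)"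

definition is_state :: "complex^'n^'n \<Rightarrow> bool" where
  "is_state M \<longleftrightarrow> psd M \<and> trace M = 1"

definition kron :: "qmat \<Rightarrow> qmat \<Rightarrow> qqmat" where
  "kron A B = (\<chi> r c. A$(fst r)$(fst c) * B$(snd r)$(snd c))"

definition separable :: "qqmat \<Rightarrow> bool" where
  "separable \<rho> \<longleftrightarrow> (\<exists>(n::nat) (p::nat \<Rightarrow> real) (A::nat \<Rightarrow> qmat) (B::nat \<Rightarrow> qmat).
      (\<forall>k<n. p k \<ge> 0 \<and> is_state (A k) \<and> is_state (B k)) \<and> (\<Sum>k<n. p k) = 1 \<and>
      \<rho> = (\<Sum>k<n. p k *\<^sub>R kron (A k) (B k)))"

definition X_state :: "qqmat \<Rightarrow> bool" where
  "X_state \<rho> \<longleftrightarrow> is_state \<rho> \<and>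
     (\<forall>i j k l. \<rho>$(i,j)$(k,l) \<noteq> 0 \<longrightarrow> ((k,l) = (i,j) \<or> (k,l) = (1 - i, 1 - j)))"

definition ket_bra :: "complex^2 \<Rightarrow> qmat" where
  "ket_bra v = (\<chi> i j. v$i * cnj (v$j))"

definition cinner :: "complex^'n \<Rightarrow> complex^'n \<Rightarrow> complex" where
  "cinner u v = (\<Sum>i\<in>UNIV. cnj (u$i) * v$i)"

definition Omega0 :: "qqmat set" where
  "Omega0 = {X. \<exists>(\<psi>::2 \<Rightarrow> complex^2) (p::2 \<Rightarrow> real) (\<sigma>::2 \<Rightarrow> qmat).
      (\<forall>k l. cinner (\<psi> k) (\<psi> l) = (if k = l then 1 else 0)) \<and>
      (\<forall>k. p k \<ge> 0 \<and> is_state (\<sigma> k)) \<and> (\<Sum>k\<in>UNIV. p k) = 1 \<and>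
      X = (\<Sum>k\<in>UNIV. p k *\<^sub>R kron (ket_bra (\<psi> k)) (\<sigma> k))}"

definition hs_norm2 :: "complex^'n^'m \<Rightarrow> real" where
  "hs_norm2 X = (\<Sum>i\<in>UNIV. \<Sum>j\<in>UNIV. (cmod (X$i$j))^2)"

definition geometric_discord :: "qqmat \<Rightarrow> real" where
  "geometric_discord \<rho> = 2 * Inf ((\<lambda>X. hs_norm2 (\<rho> - X)) ` Omega0)"

end

theory Submission
  imports Defs
begin

text \<open>An X-state is given by populations a, b, c, d and coherences p, q; positivity means
  |p|^2 \<le> a d and |q|^2 \<le> b c, and separability adds the partial-transpose conditions
  |p|^2 \<le> b c and |q|^2 \<le> a d. Two explicit classical-quantum states bound the geometric discord
  from above: measuring the first qubit in the computational basis gives 4 (|p|^2 + |q|^2), measuring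
  it in a suitably phased Hadamard basis gives 2 (|p| - |q|)^2 + (a - c)^2 + (b - d)^2. Under the
  constraints the smaller of the two is at most 1/4, with equality only if |p| = |q| and
  a d = b c = |p|^2 > 0, which forces rank 2. The value 1/4 is attained by the state with populations
  (2 \<plusminus> \<surd>2)/8 and coherences \<surd>2/8: the off-diagonal blocks (<\<psi>0| \<otimes> I) X (|\<psi>1> \<otimes> I)
  of a classical-quantum state X vanish, whereas those of the witness have squared norm at least
  1/16 each.\<close>

lemma UNIV_2_eq: "(UNIV::2 set) = {0,1}"
  using exhaust_2 by (metis (full_types) insertCI UNIV_eq_I zero_neq_one)

lemma sum_UNIV_2: "sum f (UNIV::2 set) = f 0 + f 1"
  by (simp add: UNIV_2_eq)

lemma UNIV_2x2_eq: "(UNIV::(2\<times>2) set) = {(0,0),(0,1),(1,0),(1,1)}"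
proof -
  have "(UNIV::(2\<times>2) set) = (UNIV::2 set) \<times> (UNIV::2 set)" by simp
  also have "\<dots> = {(0,0),(0,1),(1,0),(1,1)}" unfolding UNIV_2_eq by auto
  finally show ?thesis .
qed

lemma sum_UNIV_2x2: "sum f (UNIV::(2\<times>2) set) = f (0,0) + f (0,1) + f (1,0) + f (1,1)"
  by (simp add: UNIV_2x2_eq algebra_simps)

lemma exhaust_2_01: "(x::2) = 0 \<or> x = 1"
  using UNIV_2_eq by auto

lemma cmod_mult_self: "cmod z * cmod z = Re z * Re z + Im z * Im z"
  by (metis cmod_power2 power2_eq_square)

definition herm2_form :: "real \<Rightarrow> real \<Rightarrow> complex \<Rightarrow> complex \<Rightarrow> complex \<Rightarrow> complex" where
  "herm2_form P R S x y = cnj x * P * x + cnj x * S * y + cnj y * cnj S * x + cnj y * R * y"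

lemma Im_herm2_form: "Im (herm2_form P R S x y) = 0"
  by (simp add: herm2_form_def algebra_simps)

lemma Re_herm2_form:
  "Re (herm2_form P R S x y) = P * (cmod x)^2 + R * (cmod y)^2 + 2 * Re (cnj x * S * y)"
  by (simp add: herm2_form_def algebra_simps power2_eq_square cmod_mult_self)

lemma herm2_form_nonneg_imp_minor:
  assumes "\<forall>x y. Re (herm2_form P R S x y) \<ge> 0"
  shows "P \<ge> 0" "R \<ge> 0" "(cmod S)^2 \<le> P * R"
proof -
  show P: "P \<ge> 0" using assms[rule_format, of 1 0] by (simp add: Re_herm2_form)
  show R: "R \<ge> 0" using assms[rule_format, of 0 1] by (simp add: Re_herm2_form)
  have e1: "Re (herm2_form P R S (-S) P) = P * (P * R - (cmod S)^2)"
    by (simp add: Re_herm2_form power2_eq_square cmod_mult_self algebra_simps)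
  show "(cmod S)^2 \<le> P * R"
  proof (cases "P = 0")
    case False
    with P have "P > 0" by simp
    moreover have "P * (P * R - (cmod S)^2) \<ge> 0" using assms[rule_format, of "-S" P] e1 by simp
    ultimately show ?thesis by (simp add: zero_le_mult_iff)
  next
    case True
    show ?thesis
    proof (rule ccontr)
      assume "\<not> ?thesis"
      with True have S: "(cmod S)^2 > 0" by (simp add: not_le)
      define t where "t = (R + 1) / (2 * (cmod S)^2)"
      have "Re (herm2_form P R S (- (of_real t * S)) 1) = R - 2 * t * (cmod S)^2"
        using True by (simp add: Re_herm2_form power2_eq_square cmod_mult_self algebra_simps)
      also have "\<dots> = -1" using S by (simp add: t_def field_simps)
      finally show False using assms[rule_format, of "- (of_real t * S)" 1] by simp
    qed
  qed
qed

lemma herm2_form_nonneg: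
  assumes "P \<ge> 0" "R \<ge> 0" "(cmod S)^2 \<le> P * R"
  shows "Re (herm2_form P R S x y) \<ge> 0"
proof -
  have "Re (cnj x * S * y) \<ge> - (cmod x * cmod S * cmod y)"
  proof -
    have "\<bar>Re (cnj x * S * y)\<bar> \<le> cmod (cnj x * S * y)" by (rule abs_Re_le_cmod)
    also have "\<dots> = cmod x * cmod S * cmod y" by (simp add: norm_mult)
    finally show ?thesis by linarith
  qed
  moreover have "cmod S \<le> sqrt P * sqrt R"
    using assms by (metis norm_ge_zero real_le_rsqrt real_sqrt_mult)
  moreover have "P * (cmod x)^2 + R * (cmod y)^2 - 2 * (cmod x * (sqrt P * sqrt R) * cmod y)
      = (sqrt P * cmod x - sqrt R * cmod y)^2"
    using assms by (simp add: power2_diff power_mult_distrib real_sqrt_pow2 algebra_simps)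
  moreover have "cmod x * cmod S * cmod y \<le> cmod x * (sqrt P * sqrt R) * cmod y"
    using calculation(2) by (simp add: mult_left_mono mult_right_mono)
  ultimately show ?thesis unfolding Re_herm2_form
    by (smt (verit) zero_le_power2)
qed

lemma herm2_minor_conic_comb:
  assumes w: "\<forall>k<n. w k \<ge> 0" and h: "\<forall>k<n. P k \<ge> 0 \<and> R k \<ge> 0 \<and> (cmod (S k))^2 \<le> P k * R k"
    and P0: "P0 = (\<Sum>k<n. w k * P k)" and R0: "R0 = (\<Sum>k<n. w k * R k)"
    and S0: "S0 = (\<Sum>k<n. of_real (w k) * S k)"
  shows "(cmod S0)^2 \<le> P0 * R0"
proof (rule herm2_form_nonneg_imp_minor(3))
  show "\<forall>x y. Re (herm2_form P0 R0 S0 x y) \<ge> 0"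
  proof (intro allI)
    fix x y
    have "cnj x * S0 * y = (\<Sum>k<n. of_real (w k) * (cnj x * S k * y))"
      by (simp add: S0 sum_distrib_left sum_distrib_right algebra_simps)
    then have S0_term: "Re (cnj x * S0 * y) = (\<Sum>k<n. w k * Re (cnj x * S k * y))"
      unfolding Re_sum by simp
    have "(\<Sum>k<n. w k * Re (herm2_form (P k) (R k) (S k) x y))
        = (\<Sum>k<n. (w k * P k) * (cmod x)^2 + (w k * R k) * (cmod y)^2 + 2 * (w k * Re (cnj x * S k * y)))"
      by (rule sum.cong) (simp_all add: Re_herm2_form algebra_simps)
    also have "\<dots> = (\<Sum>k<n. w k * P k) * (cmod x)^2 + (\<Sum>k<n. w k * R k) * (cmod y)^2
        + 2 * (\<Sum>k<n. w k * Re (cnj x * S k * y))"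
      by (simp only: sum.distrib sum_distrib_right[symmetric] sum_distrib_left[symmetric])
    finally have "Re (herm2_form P0 R0 S0 x y) = (\<Sum>k<n. w k * Re (herm2_form (P k) (R k) (S k) x y))"
      unfolding Re_herm2_form S0_term P0 R0 by simp
    also have "\<dots> \<ge> 0"
      using w h herm2_form_nonneg by (intro sum_nonneg) (simp add: mult_nonneg_nonneg)
    finally show "Re (herm2_form P0 R0 S0 x y) \<ge> 0" .
  qed
qed

definition quad_form :: "complex^'n^'n \<Rightarrow> complex^'n \<Rightarrow> complex" where
  "quad_form M v = (\<Sum>i\<in>UNIV. \<Sum>j\<in>UNIV. cnj (v$i) * M$i$j * v$j)"

lemma psd_iff_quad_form: "psd M \<longleftrightarrow> (\<forall>v. Im (quad_form M v) = 0 \<and> Re (quad_form M v) \<ge> 0)"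
  by (simp add: psd_def quad_form_def Let_def)

definition pair_vec :: "'n \<Rightarrow> 'n \<Rightarrow> complex \<Rightarrow> complex \<Rightarrow> complex^'n" where
  "pair_vec i j x y = (\<chi> k. if k = i then x else if k = j then y else 0)"

lemma sum_pair_vec:
  fixes g :: "'n::finite \<Rightarrow> complex"
  assumes "i \<noteq> j"
  shows "(\<Sum>k\<in>UNIV. g k * (pair_vec i j x y)$k) = g i * x + g j * y"
    "(\<Sum>k\<in>UNIV. cnj ((pair_vec i j x y)$k) * g k) = cnj x * g i + cnj y * g j"
proof -
  have "(\<Sum>k\<in>UNIV. g k * (pair_vec i j x y)$k)
      = (\<Sum>k\<in>UNIV. (if k = i then g i * x else 0) + (if k = j then g j * y else 0))"
    by (rule sum.cong) (use assms in \<open>auto simp: pair_vec_def\<close>)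
  then show "(\<Sum>k\<in>UNIV. g k * (pair_vec i j x y)$k) = g i * x + g j * y"
    by (simp add: sum.distrib)
  have "(\<Sum>k\<in>UNIV. cnj ((pair_vec i j x y)$k) * g k)
      = (\<Sum>k\<in>UNIV. (if k = i then cnj x * g i else 0) + (if k = j then cnj y * g j else 0))"
    by (rule sum.cong) (use assms in \<open>auto simp: pair_vec_def\<close>)
  then show "(\<Sum>k\<in>UNIV. cnj ((pair_vec i j x y)$k) * g k) = cnj x * g i + cnj y * g j"
    by (simp add: sum.distrib)
qed

lemma quad_form_pair_vec:
  fixes M :: "complex^'n^'n"
  assumes "i \<noteq> j"
  shows "quad_form M (pair_vec i j x y)
    = cnj x * M$i$i * x + cnj x * M$i$j * y + cnj y * M$j$i * x + cnj y * M$j$j * y"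
proof -
  have "quad_form M (pair_vec i j x y)
      = (\<Sum>k\<in>UNIV. cnj ((pair_vec i j x y)$k) * (\<Sum>l\<in>UNIV. M$k$l * (pair_vec i j x y)$l))"
    unfolding quad_form_def by (simp add: sum_distrib_left mult.assoc)
  also have "\<dots> = (\<Sum>k\<in>UNIV. cnj ((pair_vec i j x y)$k) * (M$k$i * x + M$k$j * y))"
    using sum_pair_vec(1)[OF assms] by simp
  also have "\<dots> = cnj x * (M$i$i * x + M$i$j * y) + cnj y * (M$j$i * x + M$j$j * y)"
    using sum_pair_vec(2)[OF assms, where g="\<lambda>k. M$k$i * x + M$k$j * y"] by simp
  finally show ?thesis by (simp add: algebra_simps)
qed

lemma psd_2x2_minor:
  fixes M :: "complex^'n^'n"
  assumes "psd M" "i \<noteq> j"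
  shows "Im (M$i$i) = 0" "Re (M$i$i) \<ge> 0" "M$j$i = cnj (M$i$j)"
    "(cmod (M$i$j))^2 \<le> Re (M$i$i) * Re (M$j$j)"
proof -
  have q: "\<And>x y. Im (quad_form M (pair_vec i j x y)) = 0 \<and> Re (quad_form M (pair_vec i j x y)) \<ge> 0"
    using assms(1) psd_iff_quad_form by blast
  note qf = quad_form_pair_vec[OF assms(2)]
  have d1: "Im (M$i$i) = 0 \<and> Re (M$i$i) \<ge> 0" using q[of 1 0] by (simp add: qf)
  then show "Im (M$i$i) = 0" "Re (M$i$i) \<ge> 0" by auto
  have d2: "Im (M$j$j) = 0 \<and> Re (M$j$j) \<ge> 0" using q[of 0 1] by (simp add: qf)
  have "Im (M$i$j + M$j$i) = 0" using q[of 1 1] d1 d2 by (simp add: qf)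
  moreover have "Re (M$i$j - M$j$i) = 0" using q[of 1 \<i>] d1 d2 by (simp add: qf)
  ultimately show herm: "M$j$i = cnj (M$i$j)" by (simp add: complex_eq_iff)
  have mi: "M$i$i = of_real (Re (M$i$i))" using d1 by (simp add: complex_eq_iff)
  have mj: "M$j$j = of_real (Re (M$j$j))" using d2 by (simp add: complex_eq_iff)
  have "\<forall>x y. Re (herm2_form (Re (M$i$i)) (Re (M$j$j)) (M$i$j) x y) \<ge> 0"
  proof (intro allI)
    fix x y
    have "herm2_form (Re (M$i$i)) (Re (M$j$j)) (M$i$j) x y = quad_form M (pair_vec i j x y)"
      unfolding qf herm2_form_def herm by (subst mi, subst mj) simp
    then show "Re (herm2_form (Re (M$i$i)) (Re (M$j$j)) (M$i$j) x y) \<ge> 0" using q by simp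
  qed
  then show "(cmod (M$i$j))^2 \<le> Re (M$i$i) * Re (M$j$j)" by (rule herm2_form_nonneg_imp_minor)
qed

definition qmat2 :: "real \<Rightarrow> real \<Rightarrow> complex \<Rightarrow> qmat" where
  "qmat2 P R S = (\<chi> i j.
     if i = 0 then (if j = 0 then of_real P else S) else (if j = 0 then cnj S else of_real R))"

lemma qmat2_nth [simp]:
  "qmat2 P R S $ 0 $ 0 = of_real P" "qmat2 P R S $ 0 $ 1 = S"
  "qmat2 P R S $ 1 $ 0 = cnj S" "qmat2 P R S $ 1 $ 1 = of_real R"
  by (simp_all add: qmat2_def)

lemma quad_form_qmat:
  "quad_form (A::qmat) v
    = cnj (v$0) * A$0$0 * v$0 + cnj (v$0) * A$0$1 * v$1 + cnj (v$1) * A$1$0 * v$0 + cnj (v$1) * A$1$1 * v$1"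
  by (simp add: quad_form_def sum_UNIV_2 algebra_simps)

lemma is_state_qmat2:
  assumes "P \<ge> 0" "R \<ge> 0" "P + R = 1" "(cmod S)^2 \<le> P*R"
  shows "is_state (qmat2 P R S)"
  unfolding is_state_def psd_iff_quad_form
proof (intro conjI allI)
  fix v :: "complex^2"
  have "quad_form (qmat2 P R S) v = herm2_form P R S (v$0) (v$1)"
    by (simp add: quad_form_qmat herm2_form_def)
  then show "Im (quad_form (qmat2 P R S) v) = 0" "Re (quad_form (qmat2 P R S) v) \<ge> 0"
    using Im_herm2_form herm2_form_nonneg assms by simp_all
next
  show "trace (qmat2 P R S) = 1"
    using assms(3) unfolding trace_def sum_UNIV_2 by (metis qmat2_nth(1,4) of_real_1 of_real_add)
qed

lemma sum_kron_nth:
  "(\<Sum>k\<in>K. w k *\<^sub>R kron (A k) (B k)) $ r $ s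
     = (\<Sum>k\<in>K. of_real (w k) * (A k $ fst r $ fst s * B k $ snd r $ snd s))"
  by (simp add: sum_component kron_def vector_scaleR_component) (simp add: scaleR_conv_of_real)

text \<open>The 2x2 minors of the partial transpose of a separable state are nonnegative: each product
  state contributes a triple (P, R, S) with P, R \<ge> 0 and |S|^2 \<le> P R, and these triples
  form a convex cone.\<close>

lemma separable_partial_transpose_minor:
  assumes "separable \<rho>" and "i \<noteq> i'" and "j \<noteq> j'"
  shows "(cmod (\<rho>$(i,j)$(i',j')))^2 \<le> Re (\<rho>$(i,j')$(i,j')) * Re (\<rho>$(i',j)$(i',j))"
proof -
  obtain n :: nat and w A B where h: "\<forall>k<n. w k \<ge> 0 \<and> is_state (A k) \<and> is_state (B k)"
    and \<rho>: "\<rho> = (\<Sum>k<n. w k *\<^sub>R kron (A k) (B k))"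
    using assms(1) unfolding separable_def by blast
  have psd: "psd (A k)" "psd (B k)" if "k < n" for k
    using h that by (simp_all add: is_state_def)
  note A = psd_2x2_minor[OF psd(1) assms(2)] psd_2x2_minor[OF psd(1) assms(2)[symmetric]]
  note B = psd_2x2_minor[OF psd(2) assms(3)] psd_2x2_minor[OF psd(2) assms(3)[symmetric]]
  have diag: "Re (\<rho>$(l,m)$(l,m)) = (\<Sum>k<n. w k * (Re (A k$l$l) * Re (B k$m$m)))"
    if "l \<in> {i, i'}" "m \<in> {j, j'}" for l m
    unfolding \<rho> sum_kron_nth Re_sum
    by (intro sum.cong) (use that A B in auto)
  show ?thesis
  proof (rule herm2_minor_conic_comb[where w=w and n=n
        and P="\<lambda>k. Re (A k$i$i) * Re (B k$j'$j')" and R="\<lambda>k. Re (A k$i'$i') * Re (B k$j$j)"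
        and S="\<lambda>k. A k$i$i' * B k$j$j'"])
    show "\<forall>k<n. w k \<ge> 0" using h by blast
    show "\<forall>k<n. 0 \<le> Re (A k$i$i) * Re (B k$j'$j') \<and> 0 \<le> Re (A k$i'$i') * Re (B k$j$j) \<and>
      (cmod (A k$i$i' * B k$j$j'))^2 \<le> Re (A k$i$i) * Re (B k$j'$j') * (Re (A k$i'$i') * Re (B k$j$j))"
    proof (intro allI impI conjI)
      fix k assume k: "k < n"
      show "0 \<le> Re (A k$i$i) * Re (B k$j'$j')" "0 \<le> Re (A k$i'$i') * Re (B k$j$j)"
        using A[OF k] B[OF k] by simp_all
      have "(cmod (A k$i$i' * B k$j$j'))^2 = (cmod (A k$i$i'))^2 * (cmod (B k$j$j'))^2"
        by (simp add: norm_mult power_mult_distrib)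
      also have "\<dots> \<le> (Re (A k$i$i) * Re (A k$i'$i')) * (Re (B k$j$j) * Re (B k$j'$j'))"
        using A[OF k] B[OF k] by (intro mult_mono) simp_all
      finally show "(cmod (A k$i$i' * B k$j$j'))^2
          \<le> Re (A k$i$i) * Re (B k$j'$j') * (Re (A k$i'$i') * Re (B k$j$j))"
        by (simp add: algebra_simps)
    qed
    show "Re (\<rho>$(i,j')$(i,j')) = (\<Sum>k<n. w k * (Re (A k$i$i) * Re (B k$j'$j')))"
      by (rule diag) simp_all
    show "Re (\<rho>$(i',j)$(i',j)) = (\<Sum>k<n. w k * (Re (A k$i'$i') * Re (B k$j$j)))"
      by (rule diag) simp_all
    show "\<rho>$(i,j)$(i',j') = (\<Sum>k<n. of_real (w k) * (A k$i$i' * B k$j$j'))"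
      unfolding \<rho> sum_kron_nth by simp
  qed
qed

definition xmat :: "real \<Rightarrow> real \<Rightarrow> real \<Rightarrow> real \<Rightarrow> complex \<Rightarrow> complex \<Rightarrow> qqmat" where
  "xmat a b c d p q = (\<chi> r s.
     if r = s then of_real (if r = (0,0) then a else if r = (0,1) then b else if r = (1,0) then c else d)
     else if r = (0,0) \<and> s = (1,1) then p
     else if r = (1,1) \<and> s = (0,0) then cnj p
     else if r = (0,1) \<and> s = (1,0) then q
     else if r = (1,0) \<and> s = (0,1) then cnj q else 0)"

lemma xmat_nth [simp]:
  "xmat a b c d p q $ (0,0) $ (0,0) = of_real a" "xmat a b c d p q $ (0,0) $ (0,1) = 0"
  "xmat a b c d p q $ (0,0) $ (1,0) = 0" "xmat a b c d p q $ (0,0) $ (1,1) = p"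
  "xmat a b c d p q $ (0,1) $ (0,0) = 0" "xmat a b c d p q $ (0,1) $ (0,1) = of_real b"
  "xmat a b c d p q $ (0,1) $ (1,0) = q" "xmat a b c d p q $ (0,1) $ (1,1) = 0"
  "xmat a b c d p q $ (1,0) $ (0,0) = 0" "xmat a b c d p q $ (1,0) $ (0,1) = cnj q"
  "xmat a b c d p q $ (1,0) $ (1,0) = of_real c" "xmat a b c d p q $ (1,0) $ (1,1) = 0"
  "xmat a b c d p q $ (1,1) $ (0,0) = cnj p" "xmat a b c d p q $ (1,1) $ (0,1) = 0"
  "xmat a b c d p q $ (1,1) $ (1,0) = 0" "xmat a b c d p q $ (1,1) $ (1,1) = of_real d"
  by (simp_all add: xmat_def)

lemma qqmat_eqI:
  fixes A B :: qqmat
  assumes "\<forall>r\<in>{(0,0),(0,1),(1,0),(1,1)}. \<forall>s\<in>{(0,0),(0,1),(1,0),(1,1)}. A$r$s = B$r$s"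
  shows "A = B"
  using assms unfolding vec_eq_iff UNIV_2x2_eq[symmetric] by blast

lemma xmat_diff:
  "xmat a b c d p q - xmat a' b' c' d' p' q' = xmat (a-a') (b-b') (c-c') (d-d') (p-p') (q-q')"
  by (rule qqmat_eqI) simp

lemma hs_norm2_xmat: "hs_norm2 (xmat a b c d p q) = a^2+b^2+c^2+d^2 + 2*(cmod p)^2 + 2*(cmod q)^2"
  unfolding hs_norm2_def sum_UNIV_2x2 by simp

lemma trace_xmat: "trace (xmat a b c d p q) = of_real (a+b+c+d)"
  unfolding trace_def sum_UNIV_2x2 by simp

lemma quad_form_xmat:
  "quad_form (xmat a b c d p q) v
    = herm2_form a d p (v$(0,0)) (v$(1,1)) + herm2_form b c q (v$(0,1)) (v$(1,0))"
  unfolding quad_form_def sum_UNIV_2x2 herm2_form_def by (simp add: algebra_simps)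

lemma psd_xmat:
  assumes "a \<ge> 0" "b \<ge> 0" "c \<ge> 0" "d \<ge> 0" "(cmod p)^2 \<le> a*d" "(cmod q)^2 \<le> b*c"
  shows "psd (xmat a b c d p q)"
  unfolding psd_iff_quad_form quad_form_xmat
  using herm2_form_nonneg[of a d p] herm2_form_nonneg[of b c q] Im_herm2_form assms by simp

lemma X_state_xmat:
  assumes "a \<ge> 0" "b \<ge> 0" "c \<ge> 0" "d \<ge> 0" "(cmod p)^2 \<le> a*d" "(cmod q)^2 \<le> b*c"
    and "a+b+c+d = 1"
  shows "X_state (xmat a b c d p q)"
  unfolding X_state_def is_state_def
proof (intro conjI allI impI)
  show "psd (xmat a b c d p q)" using psd_xmat assms by simp
  show "trace (xmat a b c d p q) = 1" using assms by (simp add: trace_xmat)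
  fix i j k l assume "xmat a b c d p q $ (i, j) $ (k, l) \<noteq> 0"
  then show "(k, l) = (i, j) \<or> (k, l) = (1 - i, 1 - j)"
    using exhaust_2_01[of i] exhaust_2_01[of j] exhaust_2_01[of k] exhaust_2_01[of l]
    by (elim disjE) (simp_all add: xmat_def)
qed

lemma X_stateE:
  assumes "X_state \<rho>"
  obtains a b c d p q where "\<rho> = xmat a b c d p q" "a \<ge> 0" "b \<ge> 0" "c \<ge> 0" "d \<ge> 0"
    "a+b+c+d = 1" "(cmod p)^2 \<le> a*d" "(cmod q)^2 \<le> b*c"
proof -
  have ps: "psd \<rho>" and tr: "trace \<rho> = 1"
    and z: "\<And>i j k l. \<rho>$(i,j)$(k,l) \<noteq> 0 \<Longrightarrow> (k,l) = (i,j) \<or> (k,l) = (1-i,1-j)"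
    using assms unfolding X_state_def is_state_def by blast+
  have n1: "((0::2),(0::2)) \<noteq> (1,1)" "((0::2),(1::2)) \<noteq> (1,0)" by simp_all
  note e1 = psd_2x2_minor[OF ps n1(1)] and e2 = psd_2x2_minor[OF ps n1(2)]
    and e3 = psd_2x2_minor[OF ps n1(1)[symmetric]] and e4 = psd_2x2_minor[OF ps n1(2)[symmetric]]
  define a where "a = Re (\<rho>$(0,0)$(0,0))"
  define b where "b = Re (\<rho>$(0,1)$(0,1))"
  define c where "c = Re (\<rho>$(1,0)$(1,0))"
  define d where "d = Re (\<rho>$(1,1)$(1,1))"
  define p where "p = \<rho>$(0,0)$(1,1)"
  define q where "q = \<rho>$(0,1)$(1,0)"
  have zz: "\<rho>$(i,j)$(k,l) = 0" if "(k,l) \<noteq> (i,j)" "(k,l) \<noteq> (1-i,1-j)" for i j k l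
    using z[of i j k l] that by blast
  have eq: "\<rho> = xmat a b c d p q"
  proof (rule qqmat_eqI)
    show "\<forall>r\<in>{(0,0),(0,1),(1,0),(1,1)}. \<forall>s\<in>{(0,0),(0,1),(1,0),(1,1)}.
        \<rho>$r$s = xmat a b c d p q $ r $ s"
      using e1 e2 e3 e4 zz[of 0 0 0 1] zz[of 0 0 1 0] zz[of 0 1 0 0] zz[of 0 1 1 1]
        zz[of 1 0 0 0] zz[of 1 0 1 1] zz[of 1 1 0 1] zz[of 1 1 1 0]
      by (simp add: a_def b_def c_def d_def p_def q_def complex_eq_iff)
  qed
  have "a+b+c+d = 1" using tr unfolding eq trace_xmat by (metis of_real_eq_1_iff)
  moreover have "(cmod p)^2 \<le> a*d" "(cmod q)^2 \<le> b*c"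
    using e1 e2 by (simp_all add: a_def b_def c_def d_def p_def q_def)
  moreover have "a \<ge> 0" "b \<ge> 0" "c \<ge> 0" "d \<ge> 0" using e1 e2 e3 e4
    by (simp_all add: a_def b_def c_def d_def)
  ultimately show ?thesis using that eq by blast
qed

lemma separable_xmat_minors:
  assumes "separable (xmat a b c d p q)"
  shows "(cmod p)^2 \<le> b*c" "(cmod q)^2 \<le> a*d"
  using separable_partial_transpose_minor[OF assms, of 0 1 0 1]
    separable_partial_transpose_minor[OF assms, of 0 1 1 0]
  by simp_all

lemma quarter_le_of_one_le_8_sq:
  fixes u :: real
  assumes "0 \<le> u" and "1 \<le> 8 * u^2"
  shows "1/4 \<le> u"
proof (rule ccontr)
  assume "\<not> 1/4 \<le> u"
  then have "u^2 \<le> (1/4)^2" using assms(1) by (intro power_mono) simp_all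
  then show False using assms(2) by (simp add: power_divide)
qed

lemma sq_add_le_of_sq_le:
  fixes \<alpha> \<beta> A B R :: real
  assumes \<alpha>: "\<alpha>^2 \<le> A" and \<beta>: "\<beta>^2 \<le> B" and R: "0 \<le> R" "4*A*B \<le> R^2"
  shows "(\<alpha>+\<beta>)^2 \<le> A + B + R"
    and "(\<alpha>+\<beta>)^2 = A + B + R \<Longrightarrow> \<alpha>^2 = A \<and> \<beta>^2 = B"
proof -
  have "A \<ge> 0" using \<alpha> by (meson order_trans zero_le_power2)
  have "(2*\<bar>\<alpha>\<bar>*\<bar>\<beta>\<bar>)^2 = 4*\<alpha>^2*\<beta>^2" by (simp add: power_mult_distrib)
  also have "\<dots> \<le> 4*A*B" using mult_mono[OF \<alpha> \<beta> \<open>A \<ge> 0\<close> zero_le_power2] by simp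
  also have "\<dots> \<le> R^2" by (rule R(2))
  finally have "2*\<bar>\<alpha>\<bar>*\<bar>\<beta>\<bar> \<le> R" using R(1) by (meson abs_ge_zero power2_le_imp_le)
  moreover have "(\<alpha>+\<beta>)^2 \<le> \<alpha>^2 + \<beta>^2 + 2*\<bar>\<alpha>\<bar>*\<bar>\<beta>\<bar>"
  proof -
    have "\<alpha>*\<beta> \<le> \<bar>\<alpha>\<bar>*\<bar>\<beta>\<bar>" by (metis abs_ge_self abs_mult)
    then show ?thesis by (simp add: power2_eq_square algebra_simps)
  qed
  ultimately show "(\<alpha>+\<beta>)^2 \<le> A + B + R" and "(\<alpha>+\<beta>)^2 = A + B + R \<Longrightarrow> \<alpha>^2 = A \<and> \<beta>^2 = B"
    using \<alpha> \<beta> by linarith+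
qed

lemma diag_imbalance_bound:
  fixes a b c d m :: real
  assumes nn: "a \<ge> 0" "b \<ge> 0" "c \<ge> 0" "d \<ge> 0" and s1: "a+b+c+d = 1"
    and m1: "m \<le> a*d" and m2: "m \<le> b*c" and m3: "32*m \<ge> 1"
  shows "2*(a-c)^2 + 2*(b-d)^2 + 16*m \<le> 1"
    and "2*(a-c)^2 + 2*(b-d)^2 + 16*m = 1 \<Longrightarrow> a*d = m \<and> b*c = m"
proof -
  define u where "u = a+d"
  define v where "v = b+c"
  define \<alpha> where "\<alpha> = a-d"
  define \<beta> where "\<beta> = b-c"
  define A where "A = u^2 - 4*m"
  define B where "B = v^2 - 4*m"
  define R where "R = 2 * u * v - (u-v)^2 - 8*m"
  have vv: "v = 1 - u" using s1 by (simp add: u_def v_def)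
  have ad: "4*(a*d) = u^2 - \<alpha>^2" "4*(b*c) = v^2 - \<beta>^2"
    by (simp_all add: u_def v_def \<alpha>_def \<beta>_def power2_eq_square algebra_simps)
  have aA: "\<alpha>^2 \<le> A" using ad m1 by (simp add: A_def)
  have bB: "\<beta>^2 \<le> B" using ad m2 by (simp add: B_def)
  have mu: "8*m \<le> 2 * u^2" "8*m \<le> 2 * v^2"
    using aA bB by (simp_all add: A_def B_def) (smt (verit) zero_le_power2)+
  have "1/4 \<le> u" "1/4 \<le> v"
    using mu m3 nn by (intro quarter_le_of_one_le_8_sq; simp add: u_def v_def)+
  then have "0 \<le> (max u v - min u v) * (4 * min u v - 1)" by simp
  also have "\<dots> = 2 * u * v - (u-v)^2 - 2*(min u v)^2"
    unfolding vv by (simp add: min_def max_def power2_eq_square algebra_simps)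
  also have "\<dots> \<le> R" using mu by (simp add: R_def min_def)
  finally have R0: "R \<ge> 0" .
  have "R^2 - 4*A*B = (2 * u - 1)^2 * (32*m - 1 + 2*(2 * u - 1)^2)"
    unfolding R_def A_def B_def vv by (simp add: power2_eq_square algebra_simps)
  then have RAB: "4*A*B \<le> R^2" using m3 by (smt (verit) zero_le_mult_iff zero_le_power2)
  have zz: "2*(a-c)^2 + 2*(b-d)^2 = (\<alpha>+\<beta>)^2 + (u-v)^2"
    by (simp add: \<alpha>_def \<beta>_def u_def v_def power2_eq_square algebra_simps)
  have tot: "A + B + R = 1 - (u-v)^2 - 16*m"
    unfolding A_def B_def R_def vv by (simp add: power2_eq_square algebra_simps)
  note sq = sq_add_le_of_sq_le[OF aA bB R0 RAB]
  show "2*(a-c)^2 + 2*(b-d)^2 + 16*m \<le> 1"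
    using zz sq(1) tot by linarith
  assume "2*(a-c)^2 + 2*(b-d)^2 + 16*m = 1"
  then have "\<alpha>^2 = A" "\<beta>^2 = B" using zz sq tot by linarith+
  then show "a*d = m \<and> b*c = m" using ad by (simp add: A_def B_def)
qed

lemma discord_bounds_ordered:
  fixes a b c d s t :: real
  assumes nn: "a \<ge> 0" "b \<ge> 0" "c \<ge> 0" "d \<ge> 0" and s1: "a+b+c+d = 1"
    and st: "0 \<le> t" "t \<le> s" and h: "s^2 \<le> a*d" "s^2 \<le> b*c" and big: "1/4 \<le> 4*(s^2+t^2)"
  shows "2*(s-t)^2 + ((a-c)^2 + (b-d)^2) \<le> 1/4"
    and "1/4 \<le> 2*(s-t)^2 + ((a-c)^2 + (b-d)^2) \<Longrightarrow> s = t \<and> a*d = s^2 \<and> b*c = s^2"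
proof -
  have "t^2 \<le> s^2" using st by (simp add: power_mono)
  then have "32 * s^2 \<ge> 1" using big by simp
  note imbalance = diag_imbalance_bound[OF nn s1 h this]
  have split: "4*(s-t)^2 + 8*(s^2+t^2) = 16 * s^2 - 4*(s-t)*(s + 3*t)"
    by (simp add: algebra_simps power2_eq_square)
  have "4*(s-t)*(s + 3*t) \<ge> 0" using st by simp
  then show "2*(s-t)^2 + ((a-c)^2 + (b-d)^2) \<le> 1/4"
    using imbalance(1) split big by linarith
  assume ge: "1/4 \<le> 2*(s-t)^2 + ((a-c)^2 + (b-d)^2)"
  have "2*(a-c)^2 + 2*(b-d)^2 + 16 * s^2 = 1" "(s-t)*(s + 3*t) = 0"
    using imbalance(1) split big ge \<open>4*(s-t)*(s + 3*t) \<ge> 0\<close> by linarith+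
  moreover have "s > 0" using \<open>32 * s^2 \<ge> 1\<close> st by (cases "s = 0") auto
  ultimately show "s = t \<and> a*d = s^2 \<and> b*c = s^2"
    using imbalance(2) st by auto
qed

lemma discord_bounds_le_quarter:
  fixes a b c d s t g :: real
  assumes nn: "a \<ge> 0" "b \<ge> 0" "c \<ge> 0" "d \<ge> 0" and s1: "a+b+c+d = 1"
    and st: "0 \<le> s" "0 \<le> t" and h: "s^2 \<le> a*d" "s^2 \<le> b*c" "t^2 \<le> a*d" "t^2 \<le> b*c"
    and g: "g \<le> 4*(s^2+t^2)" "g \<le> 2*(s-t)^2 + ((a-c)^2 + (b-d)^2)"
  shows "g \<le> 1/4" and "g = 1/4 \<Longrightarrow> s = t \<and> a*d = s^2 \<and> b*c = s^2"
proof -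
  define u where "u = max s t"
  define v where "v = min s t"
  have "0 \<le> v" "v \<le> u" "u^2 \<le> a*d" "u^2 \<le> b*c"
    using st h by (auto simp: u_def v_def max_def min_def)
  note ordered = discord_bounds_ordered[OF nn s1 this]
  have sym: "(u-v)^2 = (s-t)^2" "u^2+v^2 = s^2+t^2"
    by (auto simp: u_def v_def max_def min_def power2_commute)
  show "g \<le> 1/4"
  proof (cases "1/4 \<le> 4*(s^2+t^2)")
    case True
    then show ?thesis using ordered(1) g(2) sym by simp
  next
    case False
    then show ?thesis using g(1) by linarith
  qed
  assume "g = 1/4"
  then have "1/4 \<le> 4*(u^2+v^2)" "1/4 \<le> 2*(u-v)^2 + ((a-c)^2 + (b-d)^2)"
    unfolding sym using g by linarith+
  from ordered(2)[OF this] show "s = t \<and> a*d = s^2 \<and> b*c = s^2"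
    by (auto simp: u_def v_def max_def min_def split: if_splits)
qed

lemma Omega0I:
  fixes \<psi> :: "2 \<Rightarrow> complex^2" and p :: "2 \<Rightarrow> real" and \<sigma> :: "2 \<Rightarrow> qmat"
  assumes "\<forall>k l. cinner (\<psi> k) (\<psi> l) = (if k = l then 1 else 0)"
    and "\<forall>k. p k \<ge> 0 \<and> is_state (\<sigma> k)" and "sum p UNIV = 1"
  shows "(\<Sum>k\<in>UNIV. p k *\<^sub>R kron (ket_bra (\<psi> k)) (\<sigma> k)) \<in> Omega0"
  unfolding Omega0_def mem_Collect_eq
  by (intro exI[of _ \<psi>] exI[of _ p] exI[of _ \<sigma>]) (use assms in auto)

lemma hs_norm2_nonneg: "hs_norm2 X \<ge> 0"
  unfolding hs_norm2_def by (intro sum_nonneg) simp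

lemma geometric_discord_le:
  assumes "X \<in> Omega0"
  shows "geometric_discord \<rho> \<le> 2 * hs_norm2 (\<rho> - X)"
proof -
  have "Inf ((\<lambda>X. hs_norm2 (\<rho> - X)) ` Omega0) \<le> hs_norm2 (\<rho> - X)"
    by (rule cInf_lower) (use assms hs_norm2_nonneg in \<open>auto intro!: bdd_belowI[where m=0]\<close>)
  then show ?thesis unfolding geometric_discord_def by simp
qed

lemma ket_bra_nth: "ket_bra v $ i $ j = v$i * cnj (v$j)"
  by (simp add: ket_bra_def)

definition std_ket :: "2 \<Rightarrow> complex^2" where
  "std_ket k = (\<chi> i. if i = k then 1 else 0)"

lemma std_ket_nth [simp]: "std_ket 0 $ 0 = 1" "std_ket 0 $ 1 = 0" "std_ket 1 $ 0 = 0" "std_ket 1 $ 1 = 1"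
  by (simp_all add: std_ket_def)

lemma std_ket_orthonormal: "\<forall>k l. cinner (std_ket k) (std_ket l) = (if k = l then 1 else 0)"
  unfolding cinner_def std_ket_def by (simp add: sum_UNIV_2) (metis exhaust_2_01)

definition diag_state :: "real \<Rightarrow> real \<Rightarrow> qmat" where
  "diag_state x y = (if x + y = 0 then qmat2 1 0 0 else qmat2 (x/(x+y)) (y/(x+y)) 0)"

lemma is_state_diag_state: "x \<ge> 0 \<Longrightarrow> y \<ge> 0 \<Longrightarrow> is_state (diag_state x y)"
  unfolding diag_state_def by (auto intro!: is_state_qmat2 simp: field_simps add_nonneg_eq_0_iff)

lemma diag_state_nth:
  assumes "x \<ge> 0" "y \<ge> 0"
  shows "(of_real x + of_real y) * diag_state x y $ 0 $ 0 = of_real x"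
    "(of_real x + of_real y) * diag_state x y $ 1 $ 1 = of_real y"
    "diag_state x y $ 0 $ 1 = 0" "diag_state x y $ 1 $ 0 = 0"
  using assms by (auto simp: diag_state_def add_nonneg_eq_0_iff field_simps simp flip: of_real_add)

text \<open>Measuring the first qubit of an X-state in the computational basis kills the coherences.\<close>

lemma xmat_diag_in_Omega0:
  assumes nn: "a \<ge> 0" "b \<ge> 0" "c \<ge> 0" "d \<ge> 0" and "a+b+c+d = 1"
  shows "xmat a b c d 0 0 \<in> Omega0"
proof -
  let ?p = "\<lambda>k::2. if k = 0 then a+b else c+d"
  let ?\<sigma> = "\<lambda>k::2. if k = 0 then diag_state a b else diag_state c d"
  have "(\<Sum>k\<in>UNIV. ?p k *\<^sub>R kron (ket_bra (std_ket k)) (?\<sigma> k)) = xmat a b c d 0 0"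
    by (intro qqmat_eqI, unfold sum_kron_nth, unfold sum_UNIV_2)
      (simp add: ket_bra_nth diag_state_nth[OF nn(1,2)] diag_state_nth[OF nn(3,4)]
        mult.assoc[symmetric] mult.commute[of _ "ket_bra _ $ _ $ _"])
  moreover have "(\<Sum>k\<in>UNIV. ?p k *\<^sub>R kron (ket_bra (std_ket k)) (?\<sigma> k)) \<in> Omega0"
    using assms is_state_diag_state by (intro Omega0I std_ket_orthonormal) (simp_all add: sum_UNIV_2)
  ultimately show ?thesis by simp
qed

lemma geometric_discord_xmat_le_coherences:
  assumes "a \<ge> 0" "b \<ge> 0" "c \<ge> 0" "d \<ge> 0" and "a+b+c+d = 1"
  shows "geometric_discord (xmat a b c d p q) \<le> 4*((cmod p)^2 + (cmod q)^2)"
  using geometric_discord_le[OF xmat_diag_in_Omega0[OF assms], of "xmat a b c d p q"]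
  by (simp add: xmat_diff hs_norm2_xmat)

lemma cmod_sub_sgn_mult_cnj:
  fixes p q :: complex
  assumes "p \<noteq> 0"
  shows "cmod (p - sgn p * sgn q * cnj q) = \<bar>cmod p - cmod q\<bar>"
proof -
  have "sgn q * cnj q = of_real (cmod q)"
  proof (cases "q = 0")
    case False
    then show ?thesis using complex_norm_square[of q] by (simp add: sgn_eq power2_eq_square field_simps)
  qed simp
  moreover have "p = sgn p * of_real (cmod p)" using assms by (simp add: sgn_eq)
  ultimately have "p - sgn p * sgn q * cnj q = sgn p * of_real (cmod p - cmod q)"
    by (metis mult.assoc of_real_diff right_diff_distrib)
  then have "cmod (p - sgn p * sgn q * cnj q) = cmod (sgn p) * cmod (of_real (cmod p - cmod q) :: complex)"
    by (simp only: norm_mult)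
  then show ?thesis using assms by (simp only: norm_of_real norm_sgn) simp
qed

lemma phase_aligning:
  fixes p q :: complex
  obtains e where "cmod e = 1" "cmod (p - cnj e ^ 2 * cnj q) = \<bar>cmod p - cmod q\<bar>"
    "cmod (q - cnj e ^ 2 * cnj p) = \<bar>cmod p - cmod q\<bar>"
proof (cases "p = 0 \<or> q = 0")
  case True
  then show ?thesis using that[of 1] by auto
next
  case False
  define e where "e = cnj (csqrt (sgn p * sgn q))"
  have "cnj e ^ 2 = sgn p * sgn q" by (simp add: e_def)
  moreover have "cmod e = 1" using False by (simp add: e_def norm_mult norm_sgn)
  ultimately show ?thesis
    using that cmod_sub_sgn_mult_cnj[of p q] cmod_sub_sgn_mult_cnj[of q p] False
    by (simp add: mult.commute abs_minus_commute)
qed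

definition inv_sqrt2 :: complex where
  "inv_sqrt2 = of_real (sqrt (1/2))"

lemma inv_sqrt2_simps:
  "cnj inv_sqrt2 = inv_sqrt2" "inv_sqrt2 * inv_sqrt2 = 1/2" "inv_sqrt2 * (inv_sqrt2 * x) = x/2"
  by (simp_all add: inv_sqrt2_def mult.assoc[symmetric] flip: of_real_mult)

definition phase_ket :: "complex \<Rightarrow> 2 \<Rightarrow> complex^2" where
  "phase_ket e k =
     (\<chi> i. if i = 0 then inv_sqrt2 else (if k = 0 then inv_sqrt2 * e else - inv_sqrt2 * e))"

lemma phase_ket_nth [simp]:
  "phase_ket e k $ 0 = inv_sqrt2" "phase_ket e 0 $ 1 = inv_sqrt2 * e" "phase_ket e 1 $ 1 = - inv_sqrt2 * e"
  by (simp_all add: phase_ket_def)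

lemma unimodular_mult_cnj: "cmod e = 1 \<Longrightarrow> e * cnj e = 1" "cmod e = 1 \<Longrightarrow> e * (cnj e * x) = x"
  using complex_norm_square[of e] by (simp_all add: mult.assoc[symmetric])

lemma phase_ket_orthonormal:
  assumes "cmod e = 1"
  shows "\<forall>k l. cinner (phase_ket e k) (phase_ket e l) = (if k = l then 1 else 0)"
proof (intro allI)
  fix k l :: 2
  show "cinner (phase_ket e k) (phase_ket e l) = (if k = l then 1 else 0)"
    using exhaust_2_01[of k] exhaust_2_01[of l] unfolding cinner_def sum_UNIV_2
    by (elim disjE) (simp_all add: inv_sqrt2_simps algebra_simps unimodular_mult_cnj[OF assms])
qed

definition phase_state :: "real \<Rightarrow> real \<Rightarrow> complex \<Rightarrow> 2 \<Rightarrow> qmat" where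
  "phase_state P R S k = qmat2 P R (if k = 0 then S else - S)"

lemma sum_kron_phase_ket:
  assumes "cmod e = 1"
  shows "(\<Sum>k\<in>UNIV. (1/2) *\<^sub>R
      kron (ket_bra (phase_ket e k)) (phase_state (a+c) (b+d) (e*p + cnj e * cnj q) k))
     = xmat ((a+c)/2) ((b+d)/2) ((a+c)/2) ((b+d)/2) ((p + cnj e^2 * cnj q)/2) ((q + cnj e^2 * cnj p)/2)"
  by (intro qqmat_eqI, unfold sum_kron_nth, unfold sum_UNIV_2)
    (simp add: ket_bra_nth phase_state_def inv_sqrt2_simps algebra_simps
      unimodular_mult_cnj[OF assms] power2_eq_square; simp add: field_simps)

lemma sum_sqrt_minors_le:
  fixes a b c d s t :: real
  assumes "a \<ge> 0" "b \<ge> 0" "c \<ge> 0" "d \<ge> 0" "s \<ge> 0" "t \<ge> 0" "s^2 \<le> a*d" "t^2 \<le> b*c"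
  shows "(s+t)^2 \<le> (a+c)*(b+d)"
proof -
  have "(2 * s * t)^2 \<le> (a*b+c*d)^2"
  proof -
    have "(2 * s * t)^2 = 4 * (s^2 * t^2)" by (simp add: power_mult_distrib)
    also have "\<dots> \<le> 4*((a*d)*(b*c))" using mult_mono[OF assms(7,8)] assms(1-4) by simp
    also have "\<dots> = (a*b+c*d)^2 - (a*b-c*d)^2" by (simp add: power2_eq_square algebra_simps)
    also have "\<dots> \<le> (a*b+c*d)^2" by simp
    finally show ?thesis .
  qed
  moreover have "0 \<le> a*b+c*d" using assms(1-4) by simp
  ultimately have "2 * s * t \<le> a*b+c*d" by (rule power2_le_imp_le)
  moreover have "(s+t)^2 = s^2 + t^2 + 2 * s * t" by (simp add: power2_eq_square algebra_simps)
  moreover have "(a+c)*(b+d) = a*d + b*c + (a*b + c*d)" by (simp add: algebra_simps)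
  ultimately show ?thesis using assms(7,8) by linarith
qed

text \<open>Measuring the first qubit in the basis (|0> \<plusminus> e|1>)/\<surd>2 instead; the phase e is aligned so
  that the coherences p and q interfere destructively.\<close>

lemma geometric_discord_xmat_le_populations:
  assumes nn: "a \<ge> 0" "b \<ge> 0" "c \<ge> 0" "d \<ge> 0" and s1: "a+b+c+d = 1"
    and h: "(cmod p)^2 \<le> a*d" "(cmod q)^2 \<le> b*c"
  shows "geometric_discord (xmat a b c d p q) \<le> 2*(cmod p - cmod q)^2 + ((a-c)^2 + (b-d)^2)"
proof -
  obtain e where e: "cmod e = 1" and ep: "cmod (p - cnj e ^ 2 * cnj q) = \<bar>cmod p - cmod q\<bar>"
    and eq: "cmod (q - cnj e ^ 2 * cnj p) = \<bar>cmod p - cmod q\<bar>"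
    by (rule phase_aligning)
  let ?S = "e*p + cnj e * cnj q"
  have "cmod ?S \<le> cmod p + cmod q"
    using norm_triangle_ineq[of "e*p" "cnj e * cnj q"] e by (simp add: norm_mult)
  then have "(cmod ?S)^2 \<le> (cmod p + cmod q)^2" by (simp add: power_mono)
  also have "\<dots> \<le> (a+c)*(b+d)" by (rule sum_sqrt_minors_le[OF nn norm_ge_zero norm_ge_zero h])
  finally have "(cmod ?S)^2 \<le> (a+c)*(b+d)" .
  moreover have "cmod (if k = 0 then ?S else - ?S) = cmod ?S" for k :: 2
    by (cases "k = 0") (simp_all only: refl if_True if_False norm_minus_cancel)
  ultimately have "is_state (phase_state (a+c) (b+d) ?S k)" for k
    using nn s1 unfolding phase_state_def by (intro is_state_qmat2) simp_all
  then have "xmat ((a+c)/2) ((b+d)/2) ((a+c)/2) ((b+d)/2) ((p + cnj e^2 * cnj q)/2) ((q + cnj e^2 * cnj p)/2)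
      \<in> Omega0"
    unfolding sum_kron_phase_ket[OF e, symmetric]
    by (intro Omega0I phase_ket_orthonormal[OF e]) (simp_all add: sum_UNIV_2)
  then have "geometric_discord (xmat a b c d p q) \<le> 2 * hs_norm2 (xmat a b c d p q -
      xmat ((a+c)/2) ((b+d)/2) ((a+c)/2) ((b+d)/2) ((p + cnj e^2 * cnj q)/2) ((q + cnj e^2 * cnj p)/2))"
    by (rule geometric_discord_le)
  also have "\<dots> = 2*(cmod p - cmod q)^2 + ((a-c)^2 + (b-d)^2)"
  proof -
    have "p - (p + cnj e^2 * cnj q)/2 = (p - cnj e^2 * cnj q)/2"
      "q - (q + cnj e^2 * cnj p)/2 = (q - cnj e^2 * cnj p)/2"
      by (simp_all add: field_simps)
    then have "cmod (p - (p + cnj e^2 * cnj q)/2) = \<bar>cmod p - cmod q\<bar> / 2"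
      "cmod (q - (q + cnj e^2 * cnj p)/2) = \<bar>cmod p - cmod q\<bar> / 2"
      by (simp_all only: norm_divide ep eq) simp_all
    then show ?thesis unfolding xmat_diff hs_norm2_xmat
      by (simp add: power2_eq_square field_simps)
  qed
  finally show ?thesis .
qed

lemma left_inverse_imp_right_2x2:
  fixes x0 x1 y0 y1 X0 X1 Y0 Y1 :: complex
  assumes "X0 * x0 + X1 * x1 = 1" "Y0 * y0 + Y1 * y1 = 1" "X0 * y0 + X1 * y1 = 0" "Y0 * x0 + Y1 * x1 = 0"
  shows "x0 * X0 + y0 * Y0 = 1" "x1 * X1 + y1 * Y1 = 1" "x0 * X1 + y0 * Y1 = 0" "x1 * X0 + y1 * Y0 = 0"
  using assms by algebra+

definition orthonormal2 :: "complex \<Rightarrow> complex \<Rightarrow> complex \<Rightarrow> complex \<Rightarrow> bool" where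
  "orthonormal2 x0 x1 y0 y1 \<longleftrightarrow>
     cnj x0 * x0 + cnj x1 * x1 = 1 \<and> cnj y0 * y0 + cnj y1 * y1 = 1 \<and> cnj x0 * y0 + cnj x1 * y1 = 0"

lemma orthonormal2_columns:
  assumes "orthonormal2 x0 x1 y0 y1"
  shows "x0 * cnj x0 + y0 * cnj y0 = 1" "x1 * cnj x1 + y1 * cnj y1 = 1"
    "x0 * cnj x1 + y0 * cnj y1 = 0" "x1 * cnj x0 + y1 * cnj y0 = 0"
proof -
  have h: "cnj x0 * x0 + cnj x1 * x1 = 1" "cnj y0 * y0 + cnj y1 * y1 = 1" "cnj x0 * y0 + cnj x1 * y1 = 0"
    using assms by (auto simp: orthonormal2_def)
  have h4: "cnj y0 * x0 + cnj y1 * x1 = 0" using arg_cong[OF h(3), of cnj] by (simp add: mult.commute)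
  show "x0 * cnj x0 + y0 * cnj y0 = 1" "x1 * cnj x1 + y1 * cnj y1 = 1"
    "x0 * cnj x1 + y0 * cnj y1 = 0" "x1 * cnj x0 + y1 * cnj y0 = 0"
    by (fact left_inverse_imp_right_2x2[OF h h4])+
qed

lemma orthonormal2_parseval:
  assumes "orthonormal2 x0 x1 y0 y1"
  shows "(cmod (cnj x0 * w0 + cnj x1 * w1))^2 + (cmod (cnj y0 * w0 + cnj y1 * w1))^2
    = (cmod w0)^2 + (cmod w1)^2"
proof -
  note c = orthonormal2_columns[OF assms]
  have "(of_real ((cmod (cnj x0 * w0 + cnj x1 * w1))^2 + (cmod (cnj y0 * w0 + cnj y1 * w1))^2) :: complex)
     = (cnj x0 * w0 + cnj x1 * w1) * (x0 * cnj w0 + x1 * cnj w1)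
       + (cnj y0 * w0 + cnj y1 * w1) * (y0 * cnj w0 + y1 * cnj w1)"
    unfolding of_real_add complex_norm_square by simp
  also have "\<dots> = w0 * cnj w0 * (x0 * cnj x0 + y0 * cnj y0) + w1 * cnj w1 * (x1 * cnj x1 + y1 * cnj y1)
     + w0 * cnj w1 * (x1 * cnj x0 + y1 * cnj y0) + w1 * cnj w0 * (x0 * cnj x1 + y0 * cnj y1)"
    by (simp add: algebra_simps)
  also have "\<dots> = of_real ((cmod w0)^2 + (cmod w1)^2)"
    unfolding c of_real_add complex_norm_square by simp
  finally show ?thesis using of_real_eq_iff by blast
qed

lemma orthonormal2_parseval_cnj:
  assumes "orthonormal2 x0 x1 y0 y1"
  shows "(cmod (x0 * w0 + x1 * w1))^2 + (cmod (y0 * w0 + y1 * w1))^2 = (cmod w0)^2 + (cmod w1)^2"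
proof -
  have e: "cmod (u0 * w0 + u1 * w1) = cmod (cnj u0 * cnj w0 + cnj u1 * cnj w1)" for u0 u1
    by (metis complex_cnj_add complex_cnj_mult complex_mod_cnj)
  show ?thesis unfolding e orthonormal2_parseval[OF assms] by simp
qed

definition sesq2 ::
    "complex \<Rightarrow> complex \<Rightarrow> complex \<Rightarrow> complex \<Rightarrow> complex \<Rightarrow> complex \<Rightarrow> complex \<Rightarrow> complex \<Rightarrow> complex"
  where
  "sesq2 Y00 Y01 Y10 Y11 u0 u1 v0 v1 = cnj u0 * (Y00 * v0 + Y01 * v1) + cnj u1 * (Y10 * v0 + Y11 * v1)"

lemma sesq2_offdiag_bound:
  assumes "orthonormal2 x0 x1 y0 y1"
  shows "(cmod (sesq2 Y00 Y01 Y10 Y11 x0 x1 y0 y1))^2 + (cmod (sesq2 Y00 Y01 Y10 Y11 y0 y1 x0 x1))^2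
     \<le> (cmod Y00)^2 + (cmod Y01)^2 + (cmod Y10)^2 + (cmod Y11)^2"
proof -
  have b: "sesq2 Y00 Y01 Y10 Y11 u0 u1 v0 v1
      = v0 * (cnj u0 * Y00 + cnj u1 * Y10) + v1 * (cnj u0 * Y01 + cnj u1 * Y11)" for u0 u1 v0 v1
    by (simp add: sesq2_def algebra_simps)
  have "(cmod (sesq2 Y00 Y01 Y10 Y11 x0 x1 x0 x1))^2 + (cmod (sesq2 Y00 Y01 Y10 Y11 x0 x1 y0 y1))^2
      = (cmod (cnj x0 * Y00 + cnj x1 * Y10))^2 + (cmod (cnj x0 * Y01 + cnj x1 * Y11))^2"
    unfolding b by (rule orthonormal2_parseval_cnj[OF assms])
  moreover have "(cmod (sesq2 Y00 Y01 Y10 Y11 y0 y1 x0 x1))^2 + (cmod (sesq2 Y00 Y01 Y10 Y11 y0 y1 y0 y1))^2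
      = (cmod (cnj y0 * Y00 + cnj y1 * Y10))^2 + (cmod (cnj y0 * Y01 + cnj y1 * Y11))^2"
    unfolding b by (rule orthonormal2_parseval_cnj[OF assms])
  moreover note orthonormal2_parseval[OF assms, of Y00 Y10] orthonormal2_parseval[OF assms, of Y01 Y11]
  moreover have "(cmod (sesq2 Y00 Y01 Y10 Y11 x0 x1 x0 x1))^2 \<ge> 0"
    "(cmod (sesq2 Y00 Y01 Y10 Y11 y0 y1 y0 y1))^2 \<ge> 0" by simp_all
  ultimately show ?thesis by linarith
qed

lemma orthonormal2_norms:
  assumes "orthonormal2 x0 x1 y0 y1"
  shows "(cmod x0)^2 + (cmod x1)^2 = 1" "cmod y0 = cmod x1" "cmod y1 = cmod x0"
proof -
  have sq: "(cmod z)^2 + (cmod w)^2 = 1" if "z * cnj z + w * cnj w = 1" for z w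
  proof -
    have "(of_real ((cmod z)^2 + (cmod w)^2) :: complex) = 1"
      unfolding of_real_add complex_norm_square by (rule that)
    then show ?thesis using of_real_eq_1_iff by blast
  qed
  have nx: "(cmod x0)^2 + (cmod x1)^2 = 1" and ny: "(cmod y0)^2 + (cmod y1)^2 = 1"
    using sq assms by (simp_all add: orthonormal2_def mult.commute)
  have nc: "(cmod x0)^2 + (cmod y0)^2 = 1" using sq orthonormal2_columns(1)[OF assms] by simp
  show "(cmod x0)^2 + (cmod x1)^2 = 1" by (rule nx)
  show "cmod y0 = cmod x1" using nx nc by (metis add_left_cancel norm_ge_zero power2_eq_iff_nonneg)
  show "cmod y1 = cmod x0"
    using nx ny nc by (metis add.commute add_left_cancel norm_ge_zero power2_eq_iff_nonneg)
qed

lemma witness_offdiag_lower_bound: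
  fixes \<alpha> \<gamma> \<mu> :: real
  assumes on: "orthonormal2 x0 x1 y0 y1" and ag: "(\<alpha> - \<gamma>)^2 = 1/8" and mu: "\<mu>^2 = 1/32"
  shows "2 * (cmod (\<alpha> * (cnj x0 * y0) + \<gamma> * (cnj x1 * y1)))^2
      + 2 * \<mu>^2 * (cmod (cnj x0 * y1 + cnj x1 * y0))^2 \<ge> 1/16"
proof -
  note nx = orthonormal2_norms(1)[OF on] and y0 = orthonormal2_norms(2)[OF on]
    and y1 = orthonormal2_norms(3)[OF on]
  have e1: "\<alpha> * (cnj x0 * y0) + \<gamma> * (cnj x1 * y1) = of_real (\<alpha> - \<gamma>) * (cnj x0 * y0)"
  proof -
    have "cnj x1 * y1 = - (cnj x0 * y0)"
      using on by (simp add: orthonormal2_def eq_neg_iff_add_eq_0 add.commute)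
    then show ?thesis by (simp add: algebra_simps)
  qed
  have t1: "(cmod (\<alpha> * (cnj x0 * y0) + \<gamma> * (cnj x1 * y1)))^2 = 1/8 * (cmod x0)^2 * (cmod x1)^2"
    unfolding e1 norm_mult norm_of_real complex_mod_cnj power_mult_distrib power2_abs ag y0 by simp
  define A where "A = (cmod x0)^2"
  define B where "B = (cmod x1)^2"
  have "cmod (cnj x0 * y1 + cnj x1 * y0) \<ge> cmod (cnj x0 * y1) - cmod (cnj x1 * y0)"
    by (rule norm_diff_ineq)
  then have r1: "cmod (cnj x0 * y1 + cnj x1 * y0) \<ge> A - B"
    using y0 y1 by (simp add: norm_mult A_def B_def power2_eq_square)
  have "cmod (cnj x0 * y1 + cnj x1 * y0) \<ge> cmod (cnj x1 * y0) - cmod (cnj x0 * y1)"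
    by (metis add.commute norm_diff_ineq)
  then have r2: "cmod (cnj x0 * y1 + cnj x1 * y0) \<ge> B - A"
    using y0 y1 by (simp add: norm_mult A_def B_def power2_eq_square)
  have "(A - B)^2 \<le> (cmod (cnj x0 * y1 + cnj x1 * y0))^2"
    using r1 r2 by (metis abs_le_iff abs_le_square_iff abs_of_nonneg norm_ge_zero minus_diff_eq)
  moreover have "A + B = 1" using nx by (simp add: A_def B_def)
  moreover have "(A+B)^2 = (A-B)^2 + 4*A*B" by (simp add: power2_eq_square algebra_simps)
  ultimately have "4*A*B + (cmod (cnj x0 * y1 + cnj x1 * y0))^2 \<ge> 1" by simp
  then show ?thesis unfolding t1 mu by (simp add: A_def B_def algebra_simps)
qed


text \<open>block x y X is the operator (<x| \<otimes> I) X (|y> \<otimes> I) on the second qubit.\<close>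

definition block :: "complex^2 \<Rightarrow> complex^2 \<Rightarrow> qqmat \<Rightarrow> qmat" where
  "block x y X = (\<chi> j l. \<Sum>i\<in>UNIV. \<Sum>n\<in>UNIV. cnj (x$i) * X$(i,j)$(n,l) * y$n)"

lemma block_nth:
  "block x y X $ j $ l
    = sesq2 (X$(0,j)$(0,l)) (X$(0,j)$(1,l)) (X$(1,j)$(0,l)) (X$(1,j)$(1,l)) (x$0) (x$1) (y$0) (y$1)"
  by (simp add: block_def sesq2_def sum_UNIV_2 algebra_simps)

lemma block_diff: "block x y (A - B) = block x y A - block x y B"
  unfolding vec_eq_iff by (simp add: block_nth sesq2_def algebra_simps)

lemma orthonormal2_basis:
  fixes \<psi> :: "2 \<Rightarrow> complex^2"
  assumes "\<forall>k l. cinner (\<psi> k) (\<psi> l) = (if k = l then 1 else 0)"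
  shows "orthonormal2 (\<psi> 0$0) (\<psi> 0$1) (\<psi> 1$0) (\<psi> 1$1)"
  using assms[rule_format, of 0 0] assms[rule_format, of 1 1] assms[rule_format, of 0 1]
  by (simp add: orthonormal2_def cinner_def sum_UNIV_2)

lemma hs_norm2_blocks_le:
  assumes "orthonormal2 (x$0) (x$1) (y$0) (y$1)"
  shows "hs_norm2 (block x y X) + hs_norm2 (block y x X) \<le> hs_norm2 X"
proof -
  have m: "(cmod (block x y X $ j $ l))^2 + (cmod (block y x X $ j $ l))^2
      \<le> (cmod (X$(0,j)$(0,l)))^2 + (cmod (X$(0,j)$(1,l)))^2 + (cmod (X$(1,j)$(0,l)))^2
        + (cmod (X$(1,j)$(1,l)))^2" for j l
    unfolding block_nth by (rule sesq2_offdiag_bound[OF assms])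
  show ?thesis unfolding hs_norm2_def sum_UNIV_2 sum_UNIV_2x2
    using m[of 0 0] m[of 0 1] m[of 1 0] m[of 1 1] by linarith
qed

lemma block_sum_kron_ket_bra:
  fixes \<psi> :: "2 \<Rightarrow> complex^2" and p :: "2 \<Rightarrow> real" and \<sigma> :: "2 \<Rightarrow> qmat"
  shows "block x y (\<Sum>k\<in>UNIV. p k *\<^sub>R kron (ket_bra (\<psi> k)) (\<sigma> k)) $ j $ l
      = (\<Sum>k\<in>UNIV. of_real (p k) * cinner x (\<psi> k) * cinner (\<psi> k) y * \<sigma> k $ j $ l)"
  unfolding block_def vec_lambda_beta sum_kron_nth
  unfolding ket_bra_nth fst_conv snd_conv cinner_def sum_UNIV_2
  by (simp add: algebra_simps)

lemma block_Omega0_offdiag: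
  fixes \<psi> :: "2 \<Rightarrow> complex^2" and p :: "2 \<Rightarrow> real" and \<sigma> :: "2 \<Rightarrow> qmat"
  assumes "\<forall>k l. cinner (\<psi> k) (\<psi> l) = (if k = l then 1 else 0)"
  shows "block (\<psi> 0) (\<psi> 1) (\<Sum>k\<in>UNIV. p k *\<^sub>R kron (ket_bra (\<psi> k)) (\<sigma> k)) = 0"
    "block (\<psi> 1) (\<psi> 0) (\<Sum>k\<in>UNIV. p k *\<^sub>R kron (ket_bra (\<psi> k)) (\<sigma> k)) = 0"
  using assms unfolding vec_eq_iff block_sum_kron_ket_bra by (simp_all add: sum_UNIV_2)

lemma hs_norm2_blocks_witness:
  fixes \<alpha> \<gamma> \<mu> :: real
  assumes on: "orthonormal2 (x$0) (x$1) (y$0) (y$1)"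
    and ag: "(\<alpha> - \<gamma>)^2 = 1/8" and mu: "\<mu>^2 = 1/32"
  shows "hs_norm2 (block x y (xmat \<alpha> \<alpha> \<gamma> \<gamma> (of_real \<mu>) (of_real \<mu>))) \<ge> 1/16"
    "hs_norm2 (block y x (xmat \<alpha> \<alpha> \<gamma> \<gamma> (of_real \<mu>) (of_real \<mu>))) \<ge> 1/16"
proof -
  let ?r = "xmat \<alpha> \<alpha> \<gamma> \<gamma> (of_real \<mu>) (of_real \<mu>)"
  let ?E = "of_real \<alpha> * (cnj (x$0) * y$0) + of_real \<gamma> * (cnj (x$1) * y$1)"
  let ?C = "cnj (x$0) * y$1 + cnj (x$1) * y$0"
  have lb: "2 * (cmod ?E)^2 + 2 * \<mu>^2 * (cmod ?C)^2 \<ge> 1/16"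
    by (rule witness_offdiag_lower_bound[OF on ag mu])
  have diag_xy: "block x y ?r $ 0 $ 0 = ?E" "block x y ?r $ 1 $ 1 = ?E"
    and offdiag_xy: "block x y ?r $ 0 $ 1 = of_real \<mu> * ?C" "block x y ?r $ 1 $ 0 = of_real \<mu> * ?C"
    and diag_yx: "block y x ?r $ 0 $ 0 = cnj ?E" "block y x ?r $ 1 $ 1 = cnj ?E"
    and offdiag_yx: "block y x ?r $ 0 $ 1 = of_real \<mu> * cnj ?C" "block y x ?r $ 1 $ 0 = of_real \<mu> * cnj ?C"
    by (simp_all add: block_nth sesq2_def algebra_simps)
  have m2: "(cmod (of_real \<mu> * z))^2 = \<mu>^2 * (cmod z)^2" for z
    by (simp add: norm_mult power_mult_distrib)
  show "hs_norm2 (block x y ?r) \<ge> 1/16"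
    unfolding hs_norm2_def sum_UNIV_2 diag_xy offdiag_xy m2 using lb by simp
  show "hs_norm2 (block y x ?r) \<ge> 1/16"
    unfolding hs_norm2_def sum_UNIV_2 diag_yx offdiag_yx m2 complex_mod_cnj using lb by simp
qed

lemma hs_norm2_witness_minus_Omega0:
  fixes \<alpha> \<gamma> \<mu> :: real
  assumes ag: "(\<alpha> - \<gamma>)^2 = 1/8" and mu: "\<mu>^2 = 1/32" and X: "X \<in> Omega0"
  shows "hs_norm2 (xmat \<alpha> \<alpha> \<gamma> \<gamma> (of_real \<mu>) (of_real \<mu>) - X) \<ge> 1/8"
proof -
  let ?r = "xmat \<alpha> \<alpha> \<gamma> \<gamma> (of_real \<mu>) (of_real \<mu>)"
  obtain \<psi> :: "2 \<Rightarrow> complex^2" and p :: "2 \<Rightarrow> real" and \<sigma> :: "2 \<Rightarrow> qmat"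
    where o: "\<forall>k l. cinner (\<psi> k) (\<psi> l) = (if k = l then 1 else 0)"
      and X_eq: "X = (\<Sum>k\<in>UNIV. p k *\<^sub>R kron (ket_bra (\<psi> k)) (\<sigma> k))"
    using X unfolding Omega0_def by blast
  note on = orthonormal2_basis[OF o]
  have "block (\<psi> 0) (\<psi> 1) (?r - X) = block (\<psi> 0) (\<psi> 1) ?r"
    "block (\<psi> 1) (\<psi> 0) (?r - X) = block (\<psi> 1) (\<psi> 0) ?r"
    unfolding block_diff X_eq block_Omega0_offdiag[OF o] by simp_all
  then have "hs_norm2 (block (\<psi> 0) (\<psi> 1) ?r) + hs_norm2 (block (\<psi> 1) (\<psi> 0) ?r) \<le> hs_norm2 (?r - X)"
    using hs_norm2_blocks_le[OF on, of "?r - X"] by simp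
  then show ?thesis using hs_norm2_blocks_witness[OF on ag mu] by linarith
qed

lemma qqvec_eqI:
  fixes v w :: "complex^(2\<times>2)"
  assumes "\<forall>r\<in>{(0,0),(0,1),(1,0),(1,1)}. v$r = w$r"
  shows "v = w"
  using assms unfolding vec_eq_iff UNIV_2x2_eq[symmetric] by blast

lemma rows_qqmat: "rows (A::qqmat) = {A$(0,0), A$(0,1), A$(1,0), A$(1,1)}"
proof -
  have r: "row i A = A$i" for i by (simp add: row_def vec_eq_iff)
  have "rows A = (\<lambda>i. A$i) ` UNIV" unfolding rows_def r by auto
  also have "\<dots> = {A$(0,0), A$(0,1), A$(1,0), A$(1,1)}" unfolding UNIV_2x2_eq by simp
  finally show ?thesis .
qed

lemma vec_dim_pair:
  fixes u v :: "'a::field^'n"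
  assumes "v \<noteq> 0" "u \<notin> vec.span {v}"
  shows "vec.dim {u, v} = 2"
  using assms vec.dim_insert[of u "{v}"] vec.dim_insert[of v "{}"] by simp

lemma rank_xmat_eq_2:
  assumes pos: "a > 0" "b > 0" and hp: "(cmod p)^2 = a*d" and hq: "(cmod q)^2 = b*c"
  shows "rank (xmat a b c d p q) = 2"
proof -
  let ?X = "xmat a b c d p q"
  let ?r00 = "?X$(0,0)" and ?r01 = "?X$(0,1)" and ?r10 = "?X$(1,0)" and ?r11 = "?X$(1,1)"
  have pp: "cnj p * p = of_real a * of_real d"
    using hp complex_norm_square[of p] by (metis mult.commute of_real_mult)
  have qq: "cnj q * q = of_real b * of_real c"
    using hq complex_norm_square[of q] by (metis mult.commute of_real_mult)
  have a0: "(of_real a :: complex) \<noteq> 0" "(of_real b :: complex) \<noteq> 0" using pos by simp_all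
  have "?r11 = (cnj p / of_real a) *s ?r00"
    by (rule qqvec_eqI) (use a0 pp in \<open>simp add: field_simps\<close>)
  then have s11: "?r11 \<in> vec.span {?r00, ?r01}" by (simp add: vec.span_base vec.span_scale)
  have "?r10 = (cnj q / of_real b) *s ?r01"
    by (rule qqvec_eqI) (use a0 qq in \<open>simp add: field_simps mult.commute\<close>)
  then have "?r10 \<in> vec.span {?r00, ?r01}" by (simp add: vec.span_base vec.span_scale)
  then have s10: "?r10 \<in> vec.span {?r11, ?r00, ?r01}"
    using vec.span_mono[of "{?r00, ?r01}" "{?r11, ?r00, ?r01}"] by auto
  have "?r00 \<notin> vec.span {?r01}"
  proof
    assume "?r00 \<in> vec.span {?r01}"
    then obtain k where "?r00 = k *s ?r01" unfolding vec.span_singleton by auto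
    then have "?r00 $ (0,0) = (k *s ?r01) $ (0,0)" by simp
    then show False using pos by simp
  qed
  moreover have "?r01 \<noteq> 0"
  proof
    assume "?r01 = 0"
    then have "?r01 $ (0,1) = 0" by simp
    then show False using pos by simp
  qed
  ultimately have "vec.dim {?r00, ?r01} = 2" by (intro vec_dim_pair)
  then have "vec.dim {?r10, ?r11, ?r00, ?r01} = 2"
    using vec.dim_insert[of ?r11 "{?r00, ?r01}"] vec.dim_insert[of ?r10 "{?r11, ?r00, ?r01}"] s11 s10
    by simp
  moreover have "rows ?X = {?r10, ?r11, ?r00, ?r01}" unfolding rows_qqmat by auto
  ultimately show ?thesis unfolding row_rank_def_gen by simp
qed

lemma Omega0_nonempty: "Omega0 \<noteq> {}"
  using xmat_diag_in_Omega0[of 1 0 0 0] by auto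

lemma geometric_discord_ge:
  assumes "\<And>X. X \<in> Omega0 \<Longrightarrow> m \<le> hs_norm2 (\<rho> - X)"
  shows "2 * m \<le> geometric_discord \<rho>"
  unfolding geometric_discord_def using Omega0_nonempty assms by (simp add: cINF_greatest)

definition w_hi :: real where "w_hi = (2 + sqrt 2)/8"
definition w_lo :: real where "w_lo = (2 - sqrt 2)/8"
definition w_coh :: real where "w_coh = sqrt 2 / 8"

lemma witness_consts:
  "w_hi \<ge> 0" "w_lo \<ge> 0" "w_coh \<ge> 0" "w_hi + w_hi + w_lo + w_lo = 1" "w_hi * w_lo = 1/32"
  "w_coh^2 = 1/32" "(w_hi - w_lo)^2 = 1/8"
proof -
  have s2: "sqrt 2 * sqrt 2 = 2" by simp
  have "sqrt 2 < 2" using real_sqrt_less_iff[of 2 4] real_sqrt_four by simp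
  then show "w_hi \<ge> 0" "w_lo \<ge> 0" "w_coh \<ge> 0" by (simp_all add: w_hi_def w_lo_def w_coh_def)
  show "w_hi + w_hi + w_lo + w_lo = 1" by (simp add: w_hi_def w_lo_def field_simps)
  show "w_hi * w_lo = 1/32" by (simp add: w_hi_def w_lo_def algebra_simps s2)
  show "w_coh^2 = 1/32" by (simp add: w_coh_def power2_eq_square algebra_simps s2)
  have d: "w_hi - w_lo = sqrt 2 / 4" by (simp add: w_hi_def w_lo_def field_simps)
  show "(w_hi - w_lo)^2 = 1/8" unfolding d by (simp add: power_divide)
qed

text \<open>The extremal state: it saturates both discord bounds, and |p|^2 = |q|^2 = a d = b c.\<close>

definition rho_witness :: qqmat where
  "rho_witness = xmat w_hi w_hi w_lo w_lo (of_real w_coh) (of_real w_coh)"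

lemma X_state_rho_witness: "X_state rho_witness"
  unfolding rho_witness_def using witness_consts by (intro X_state_xmat) simp_all

text \<open>rho_witness = (A+ \<otimes> |+><+| + A- \<otimes> |-><-|) / 2 with |\<plusminus>> = (|0> \<plusminus> |1>)/\<surd>2.\<close>

lemma separable_rho_witness: "separable rho_witness"
  unfolding separable_def
proof (intro exI conjI)
  let ?A = "\<lambda>k::nat. qmat2 (2*w_hi) (2*w_lo) (of_real (if k = 0 then 2*w_coh else -(2*w_coh)))"
  let ?B = "\<lambda>k::nat. qmat2 (1/2) (1/2) (of_real (if k = 0 then 1/2 else -(1/2)))"
  have "is_state (?A k)" for k
  proof (rule is_state_qmat2)
    show "2*w_hi \<ge> 0" "2*w_lo \<ge> 0" "2*w_hi + 2*w_lo = 1" using witness_consts by simp_all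
    have "(cmod (of_real (if k = 0 then 2*w_coh else -(2*w_coh)) :: complex))^2 = 4 * w_coh^2"
      by (simp add: power2_eq_square)
    then show "(cmod (of_real (if k = 0 then 2*w_coh else -(2*w_coh)) :: complex))^2 \<le> 2*w_hi * (2*w_lo)"
      using witness_consts by simp
  qed
  moreover have "is_state (?B k)" for k
    by (rule is_state_qmat2) (simp_all add: power2_eq_square)
  ultimately show "\<forall>k<2. (1/2::real) \<ge> 0 \<and> is_state (?A k) \<and> is_state (?B k)" by simp
  show "(\<Sum>k<(2::nat). (1/2::real)) = 1" by simp
  show "rho_witness = (\<Sum>k<2. (1/2::real) *\<^sub>R kron (?A k) (?B k))"
    by (intro qqmat_eqI, unfold sum_kron_nth rho_witness_def) (simp add: numeral_2_eq_2 field_simps)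
qed

lemma geometric_discord_rho_witness: "geometric_discord rho_witness = 1/4"
proof (rule antisym)
  note c = witness_consts
  show "geometric_discord rho_witness \<le> 1/4"
    using geometric_discord_xmat_le_coherences[of w_hi w_hi w_lo w_lo "of_real w_coh" "of_real w_coh"] c
    by (simp add: rho_witness_def)
  show "1/4 \<le> geometric_discord rho_witness"
    using geometric_discord_ge[of "1/8" rho_witness] hs_norm2_witness_minus_Omega0[OF c(7) c(6)]
    by (simp add: rho_witness_def)
qed

lemma separable_X_stateE:
  assumes "X_state \<rho>" "separable \<rho>"
  obtains a b c d p q where "\<rho> = xmat a b c d p q" "a \<ge> 0" "b \<ge> 0" "c \<ge> 0" "d \<ge> 0" "a+b+c+d = 1"
    "(cmod p)^2 \<le> a*d" "(cmod q)^2 \<le> b*c" "(cmod p)^2 \<le> b*c" "(cmod q)^2 \<le> a*d"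
proof -
  obtain a b c d p q where e: "\<rho> = xmat a b c d p q" and nn: "a \<ge> 0" "b \<ge> 0" "c \<ge> 0" "d \<ge> 0"
    and s1: "a+b+c+d = 1" and h: "(cmod p)^2 \<le> a*d" "(cmod q)^2 \<le> b*c"
    using X_stateE[OF assms(1)] by blast
  moreover have "(cmod p)^2 \<le> b*c" "(cmod q)^2 \<le> a*d"
    using separable_xmat_minors assms(2) unfolding e by blast+
  ultimately show ?thesis using that by blast
qed

lemma separable_X_state_discord_bounds:
  assumes "X_state \<rho>" "separable \<rho>"
  shows "geometric_discord \<rho> \<le> 1/4"
    and "geometric_discord \<rho> = 1/4 \<Longrightarrow> rank \<rho> = 2"
proof -
  obtain a b c d p q where \<rho>: "\<rho> = xmat a b c d p q" and nn: "a \<ge> 0" "b \<ge> 0" "c \<ge> 0" "d \<ge> 0"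
    and s1: "a+b+c+d = 1"
    and h: "(cmod p)^2 \<le> a*d" "(cmod q)^2 \<le> b*c" "(cmod p)^2 \<le> b*c" "(cmod q)^2 \<le> a*d"
    using separable_X_stateE[OF assms] by blast
  note bounds = discord_bounds_le_quarter[OF nn s1 norm_ge_zero norm_ge_zero h(1,3,4,2)
      geometric_discord_xmat_le_coherences[OF nn s1] geometric_discord_xmat_le_populations[OF nn s1 h(1,2)]]
  show "geometric_discord \<rho> \<le> 1/4" unfolding \<rho> by (rule bounds(1))
  assume "geometric_discord \<rho> = 1/4"
  then have eq: "cmod p = cmod q" "a*d = (cmod p)^2" "b*c = (cmod p)^2"
    using bounds(2) unfolding \<rho> by auto
  have "1/4 \<le> 4*((cmod p)^2 + (cmod q)^2)"
    using \<open>geometric_discord \<rho> = 1/4\<close> geometric_discord_xmat_le_coherences[OF nn s1, of p q]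
    unfolding \<rho> by simp
  then have "1/32 \<le> (cmod p)^2" unfolding eq(1) by simp
  then have "0 < a*d" "0 < b*c" using eq(2,3) by linarith+
  then have "a > 0" "b > 0" using nn by (auto simp: zero_less_mult_iff)
  moreover have "(cmod p)^2 = a*d" "(cmod q)^2 = b*c" using eq by simp_all
  ultimately show "rank \<rho> = 2" unfolding \<rho> by (rule rank_xmat_eq_2)
qed

theorem proposition1:
  shows "(\<forall>\<rho>. X_state \<rho> \<and> separable \<rho> \<longrightarrow> geometric_discord \<rho> \<le> 1/4)
       \<and> (\<exists>\<rho>. X_state \<rho> \<and> separable \<rho> \<and> geometric_discord \<rho> = 1/4)
       \<and> (\<forall>\<rho>. X_state \<rho> \<and> separable \<rho> \<and> geometric_discord \<rho> = 1/4 \<longrightarrow> rank \<rho> = 2)"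
  using separable_X_state_discord_bounds X_state_rho_witness separable_rho_witness
    geometric_discord_rho_witness
  by blast

end
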